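(* Let $E$ be a closed formula in which all bound variables are pairwise distinct, and let $x$ be a variable bound in $E$. Let $[\Gamma]_{V(x)}$ be a normal item occurring in (a context of a sequent of) a derivation of $\vdash E$ in LJB, and let $z$ be a free variable of $[\Gamma]_{V(x)}$. Then $x$ is in the scope of $z$.
   Context: Formulas: $A ::= P(t_1,\dots,t_n)\mid A\rightarrow A\mid\forall x\,A$, with first-order terms. A formula is a tree with nodes labelled by atomic formulas, $\rightarrow$, or $\forall x$; positions are node addresses ordered by prefix. In $E$ each bound variable $x$ labels a unique position $\forall x$; a variable $y$ is in the scope of $x$ if the position labelled $\forall x$ is a strict prefix of that labelled $\forall y$. $V(x)$ is the set of variables bound in the subformula $\forall x\,A$ of $E$ at position $\forall x$ (equivalently $x$ together with all variables in the scope of $x$). LJB: an LJB-context is a finite multiset of items; an item is a formula or $[\Gamma]_V$ ($V$ a finite set of variables bound by the bracket, $\Gamma$ an LJB-context); $FV([\Gamma]_V)=FV(\Gamma)\setminus V$. Cleaning rules (anywhere in a context): $[I,\Gamma]_V\longrightarrow I,[\Gamma]_V$ if $FV(I)\cap V=\emptyset$; $[\ ]_V\longrightarrow\emptyset$; $I\,I\longrightarrow I$; an item is normal if no cleaning rule applies inside it; $\Gamma{\downarrow}$ is the normal form for a fixed strategy. LJB rules apply only to LJB-sequents with normal context in which, in each formula, bound variables are distinct and distinct from free variables; formulas are not identified modulo $\alpha$. Rules: (L$\rightarrow$) from $\Gamma'\vdash A_1,\dots,\Gamma'\vdash A_n$ infer $\Gamma\vdash P$, where $\Gamma=\Gamma_1,[\Gamma_2,[\dots\Gamma_{i-1},[\Gamma_i,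 A_1\rightarrow\dots\rightarrow A_n\rightarrow P]_{V_{i-1}}\dots]_{V_2}]_{V_1}$ ($i\ge1$), $\Gamma'=([\dots[[\Gamma_1]_{V_1},\Gamma_2]_{V_2},\dots,\Gamma_{i-1}]_{V_{i-1}},\Gamma_i,A_1\rightarrow\dots\rightarrow A_n\rightarrow P){\downarrow}$, $P$ atomic with no free variable in $V_1\cup\dots\cup V_{i-1}$; (R$\forall$) from $[\Gamma]_V{\downarrow}\vdash A$ infer $\Gamma\vdash\forall x\,A$, $V$ the set of all variables bound in $\forall x\,A$; (R$\rightarrow$) from $(\Gamma,A){\downarrow}\vdash B$ infer $\Gamma\vdash A\rightarrow B$. *)

theory Defs
  imports Main "HOL-Library.Multiset"
begin

type_synonym var = nat

datatype trm = Var var | Fn nat "trm list"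

datatype fm = Atom nat "trm list" | Imp fm fm | All var fm

primrec fvt :: "trm \<Rightarrow> var set" where
  "fvt (Var x) = {x}"
| "fvt (Fn f ts) = \<Union> (set (map fvt ts))"

primrec fv :: "fm \<Rightarrow> var set" where
  "fv (Atom p ts) = \<Union> (set (map fvt ts))"
| "fv (Imp A B) = fv A \<union> fv B"
| "fv (All x A) = fv A - {x}"

primrec bvl :: "fm \<Rightarrow> var list" where
  "bvl (Atom p ts) = []"
| "bvl (Imp A B) = bvl A @ bvl B"
| "bvl (All x A) = x # bvl A"

primrec subfms :: "fm \<Rightarrow> fm set" where
  "subfms (Atom p ts) = {Atom p ts}"
| "subfms (Imp A B) = insert (Imp A B) (subfms A \<union> subfms B)"
| "subfms (All x A) = insert (All x A) (subfms A)"

definition is_atom :: "fm \<Rightarrow> bool" where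
  "is_atom A \<longleftrightarrow> (\<exists>p ts. A = Atom p ts)"

definition Vof :: "fm \<Rightarrow> var \<Rightarrow> var set" where
  "Vof E x = {y. \<exists>A. All x A \<in> subfms E \<and> y \<in> set (bvl (All x A))}"

definition in_scope :: "fm \<Rightarrow> var \<Rightarrow> var \<Rightarrow> bool" where
  "in_scope E x z \<longleftrightarrow> (\<exists>B C. All z B \<in> subfms E \<and> All x C \<in> subfms B)"

datatype item = F fm | Br "item multiset" "var set"

type_synonym ctx = "item multiset"

primrec FVi :: "item \<Rightarrow> var set" where
  "FVi (F A) = fv A"
| "FVi (Br G V) = \<Union> (set_mset (image_mset FVi G)) - V"

primrec fmsi :: "item \<Rightarrow> fm set" where
  "fmsi (F A) = {A}"
| "fmsi (Br G V) = \<Union> (set_mset (image_mset fmsi G))"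

definition fms_ctx :: "ctx \<Rightarrow> fm set" where
  "fms_ctx G = \<Union> (set_mset (image_mset fmsi G))"

inductive clean :: "ctx \<Rightarrow> ctx \<Rightarrow> bool" where
  c_out: "FVi I \<inter> V = {} \<Longrightarrow> clean (add_mset (Br (add_mset I D) V) R) (add_mset I (add_mset (Br D V) R))"
| c_empty: "clean (add_mset (Br {#} V) R) R"
| c_dup: "clean (add_mset I (add_mset I R)) (add_mset I R)"
| c_in: "clean D D' \<Longrightarrow> clean (add_mset (Br D V) R) (add_mset (Br D' V) R)"

definition normal_ctx :: "ctx \<Rightarrow> bool" where
  "normal_ctx G \<longleftrightarrow> \<not> (\<exists>D. clean G D)"

definition normal_item :: "item \<Rightarrow> bool" where
  "normal_item I \<longleftrightarrow> \<not> (\<exists>D. clean {#I#} D)"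

definition nf_strategy :: "(ctx \<Rightarrow> ctx) \<Rightarrow> bool" where
  "nf_strategy nf \<longleftrightarrow> (\<forall>G. clean\<^sup>*\<^sup>* G (nf G) \<and> normal_ctx (nf G))"

definition wf_fm :: "fm \<Rightarrow> bool" where
  "wf_fm A \<longleftrightarrow> distinct (bvl A) \<and> set (bvl A) \<inter> fv A = {}"

type_synonym seq = "ctx \<times> fm"

definition ljb_seq :: "seq \<Rightarrow> bool" where
  "ljb_seq s \<longleftrightarrow> normal_ctx (fst s) \<and> (\<forall>A \<in> fms_ctx (fst s) \<union> {snd s}. wf_fm A)"

text \<open>Gamma_1,[Gamma_2,[...,[Gamma_i, I]_{V_{i-1}}...]_{V_2}]_{V_1}\<close>
fun nest :: "ctx list \<Rightarrow> var set list \<Rightarrow> item \<Rightarrow> ctx" where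
  "nest [G] [] I = add_mset I G"
| "nest (G # Gs) (V # Vs) I = add_mset (Br (nest Gs Vs I) V) G"
| "nest _ _ _ = {#}"

text \<open>[...[[Gamma_1]_{V_1},Gamma_2]_{V_2},...,Gamma_{i-1}]_{V_{i-1}},Gamma_i\<close>
definition unnest :: "ctx list \<Rightarrow> var set list \<Rightarrow> ctx" where
  "unnest Gs Vs = foldl (\<lambda>acc (V, G). add_mset (Br acc V) G) (hd Gs) (zip Vs (tl Gs))"

definition imps :: "fm list \<Rightarrow> fm \<Rightarrow> fm" where
  "imps As P = foldr Imp As P"

inductive ljb_rule :: "(ctx \<Rightarrow> ctx) \<Rightarrow> seq list \<Rightarrow> seq \<Rightarrow> bool" for nf where
  L_imp: "\<lbrakk> length Gs \<ge> 1; length Vs = length Gs - 1; is_atom P;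
            fv P \<inter> \<Union> (set Vs) = {} \<rbrakk> \<Longrightarrow>
          ljb_rule nf
            (map (\<lambda>A. (nf (add_mset (F (imps As P)) (unnest Gs Vs)), A)) As)
            (nest Gs Vs (F (imps As P)), P)"
| R_all: "ljb_rule nf [(nf {#Br G (set (bvl (All x A)))#}, A)] (G, All x A)"
| R_imp: "ljb_rule nf [(nf (add_mset (F A) G), B)] (G, Imp A B)"

datatype 'a dtree = DNode 'a "'a dtree list"

primrec droot :: "'a dtree \<Rightarrow> 'a" where
  "droot (DNode s ts) = s"

primrec nodes :: "'a dtree \<Rightarrow> 'a set" where
  "nodes (DNode s ts) = insert s (\<Union> (set (map nodes ts)))"

inductive valid_deriv :: "(ctx \<Rightarrow> ctx) \<Rightarrow> seq dtree \<Rightarrow> bool" for nf where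
  "\<lbrakk> ljb_seq s; ljb_rule nf (map droot ts) s; \<forall>t \<in> set ts. valid_deriv nf t \<rbrakk>
     \<Longrightarrow> valid_deriv nf (DNode s ts)"

inductive occurs :: "item \<Rightarrow> ctx \<Rightarrow> bool" where
  "I \<in># G \<Longrightarrow> occurs I G"
| "Br D V \<in># G \<Longrightarrow> occurs I D \<Longrightarrow> occurs I G"

end

theory Submission
  imports Defs
begin

text \<open>
Read \<open>y \<in> V(x)\<close> as "the node \<open>\<forall>y\<close> of E lies at or below the node \<open>\<forall>x\<close>". As the bound
variables of E are distinct, this is a forest order: two variables with a common lower bound are
comparable. The LJB rules and the cleaning steps only ever produce items built from subformulas of E
and brackets labelled by such sets \<open>V(w)\<close>. Now let u be free in a normal bracket \<open>[\<Gamma>]\<close> labelled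
\<open>V(w)\<close>: then \<open>u \<notin> V(w)\<close>, u is free in some item I of \<open>\<Gamma>\<close>, and by normality I also has a free
variable \<open>y \<in> V(w)\<close>. The variables u and y are comparable: if I is a formula, because both are free
in a subformula of the closed formula E; if I is a bracket labelled \<open>V(w')\<close>, because by induction w'
lies strictly below both. Comparability of u with some \<open>y \<in> V(w)\<close> while \<open>u \<notin> V(w)\<close> forces w
to lie strictly below u.
\<close>

section \<open>The scope order of a formula\<close>

lemma subfms_refl: "A \<in> subfms A"
  by (cases A) auto

lemma subfms_trans: "A \<in> subfms B \<Longrightarrow> B \<in> subfms C \<Longrightarrow> A \<in> subfms C"
  by (induction C) auto

lemma Imp_subfmsD: "Imp A B \<in> subfms E \<Longrightarrow> A \<in> subfms E \<and> B \<in> subfms E"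
  using subfms_trans[of _ "Imp A B" E] by (simp add: subfms_refl)

lemma All_subfmsD: "All x A \<in> subfms E \<Longrightarrow> A \<in> subfms E"
  using subfms_trans[of _ "All x A" E] by (simp add: subfms_refl)

lemma set_bvl_mono: "A \<in> subfms B \<Longrightarrow> set (bvl A) \<subseteq> set (bvl B)"
  by (induction B) auto

lemma mem_bvl_iff: "w \<in> set (bvl B) \<longleftrightarrow> (\<exists>C. All w C \<in> subfms B)"
  by (induction B) auto

lemma All_subfms_unique:
  "distinct (bvl E) \<Longrightarrow> All w C \<in> subfms E \<Longrightarrow> All w C' \<in> subfms E \<Longrightarrow> C = C'"
proof (induction E)
  case (Imp E1 E2)
  have "w \<notin> set (bvl E1) \<or> w \<notin> set (bvl E2)" using Imp.prems(1) by auto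
  then show ?case using Imp by (auto simp: mem_bvl_iff)
qed (auto simp: mem_bvl_iff)

lemma bvl_laminar:
  "distinct (bvl E) \<Longrightarrow> X \<in> subfms E \<Longrightarrow> Y \<in> subfms E \<Longrightarrow> set (bvl X) \<inter> set (bvl Y) \<noteq> {} \<Longrightarrow>
   X \<in> subfms Y \<or> Y \<in> subfms X"
proof (induction E arbitrary: X Y)
  case (Imp E1 E2)
  have "set (bvl E1) \<inter> set (bvl E2) = {}" using Imp.prems(1) by simp
  then have "\<not> (X \<in> subfms E1 \<and> Y \<in> subfms E2)" "\<not> (X \<in> subfms E2 \<and> Y \<in> subfms E1)"
    using set_bvl_mono[of X] set_bvl_mono[of Y] Imp.prems(4) by blast+
  then show ?case using Imp.prems Imp.IH[of X Y] by auto
qed auto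

lemma Vof_eq: "distinct (bvl E) \<Longrightarrow> All w C \<in> subfms E \<Longrightarrow> Vof E w = set (bvl (All w C))"
  unfolding Vof_def using All_subfms_unique by blast

lemma Vof_refl: "w \<in> set (bvl E) \<Longrightarrow> w \<in> Vof E w"
  unfolding Vof_def mem_bvl_iff by auto

lemma bound_if_mem_Vof: "y \<in> Vof E x \<Longrightarrow> x \<in> set (bvl E)"
  unfolding Vof_def mem_bvl_iff by blast

lemma Vof_mono: "E' \<in> subfms E \<Longrightarrow> Vof E' y \<subseteq> Vof E y"
  unfolding Vof_def using subfms_trans by blast

lemma Vof_trans:
  assumes "distinct (bvl E)" "y \<in> Vof E x" "a \<in> Vof E y"
  shows "a \<in> Vof E x"
proof -
  obtain C where C: "All x C \<in> subfms E" and "y \<in> set (bvl (All x C))"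
    using assms(2) unfolding Vof_def by blast
  then obtain D where D: "All y D \<in> subfms (All x C)"
    using mem_bvl_iff by blast
  then have "Vof E y = set (bvl (All y D))"
    using Vof_eq[OF assms(1)] subfms_trans C by blast
  then show ?thesis
    using assms(3) set_bvl_mono[OF D] Vof_eq[OF assms(1) C] by blast
qed

lemma Vof_chain:
  assumes "distinct (bvl E)" "a \<in> Vof E y" "a \<in> Vof E z"
  shows "y \<in> Vof E z \<or> z \<in> Vof E y"
proof -
  obtain B C where B: "All y B \<in> subfms E" "a \<in> set (bvl (All y B))"
    and C: "All z C \<in> subfms E" "a \<in> set (bvl (All z C))"
    using assms(2,3) unfolding Vof_def by blast
  then have "All y B \<in> subfms (All z C) \<or> All z C \<in> subfms (All y B)"
    using bvl_laminar[OF assms(1)] by blast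
  then show ?thesis
    using set_bvl_mono Vof_eq[OF assms(1) B(1)] Vof_eq[OF assms(1) C(1)] by fastforce
qed

lemma strictly_above_if_comparable_outside:
  assumes "distinct (bvl E)" "y \<in> Vof E x" "z \<notin> Vof E x" "z \<in> Vof E y \<or> y \<in> Vof E z"
  shows "x \<in> Vof E z \<and> x \<noteq> z"
proof -
  have "y \<in> Vof E z"
    using assms Vof_trans by blast
  then have "x \<in> Vof E z"
    using Vof_chain[OF assms(1) assms(2)] assms(3) by blast
  moreover have "x \<in> Vof E x"
    using assms(2) by (intro Vof_refl bound_if_mem_Vof)
  ultimately show ?thesis
    using assms(3) by blast
qed

lemma free_var_bound: "A \<in> subfms E \<Longrightarrow> z \<in> fv A \<Longrightarrow> z \<notin> fv E \<Longrightarrow> z \<in> set (bvl E)"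
  by (induction E) auto

lemma free_vars_scope_comparable:
  "A \<in> subfms E \<Longrightarrow> y \<in> fv A \<Longrightarrow> z \<in> fv A \<Longrightarrow> y \<notin> fv E \<Longrightarrow> z \<notin> fv E \<Longrightarrow>
   z \<in> Vof E y \<or> y \<in> Vof E z"
proof (induction E arbitrary: A)
  case (Imp E1 E2)
  have "Vof E1 w \<subseteq> Vof (Imp E1 E2) w" "Vof E2 w \<subseteq> Vof (Imp E1 E2) w" for w
    by (simp_all add: Vof_mono subfms_refl)
  moreover have "A \<in> subfms E1 \<or> A \<in> subfms E2"
    using Imp.prems by auto
  ultimately show ?case
    using Imp.IH Imp.prems(2-) by (simp; blast)
next
  case (All v E')
  have bound: "w \<in> Vof (All v E') v" if "w \<in> fv A" "w \<notin> fv (All v E')" for w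
    using free_var_bound[OF All.prems(1) that] unfolding Vof_def by auto
  consider "y = v" | "z = v" | "y \<noteq> v" "z \<noteq> v" "A \<in> subfms E'"
    using All.prems by fastforce
  then show ?case
  proof cases
    case 3
    then have "z \<in> Vof E' y \<or> y \<in> Vof E' z"
      using All.IH All.prems(2-) by simp
    then show ?thesis
      using Vof_mono[of E' "All v E'"] by (auto simp: subfms_refl)
  qed (use bound All.prems in auto)
qed simp

lemma in_scope_if_mem_Vof:
  assumes "distinct (bvl E)" "x \<in> Vof E z" "x \<noteq> z"
  shows "in_scope E x z"
proof -
  obtain B where B: "All z B \<in> subfms E" "x \<in> set (bvl (All z B))"
    using assms(2) unfolding Vof_def by blast
  then obtain C where "All x C \<in> subfms B"
    using assms(3) mem_bvl_iff by auto
  then show ?thesis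
    unfolding in_scope_def using B by blast
qed

section \<open>Items built from a formula\<close>

definition scope_set :: "fm \<Rightarrow> var set \<Rightarrow> bool" where
  "scope_set E V \<longleftrightarrow> (\<exists>x A. All x A \<in> subfms E \<and> V = set (bvl (All x A)))"

inductive sub_item :: "fm \<Rightarrow> item \<Rightarrow> bool" for E where
  "A \<in> subfms E \<Longrightarrow> sub_item E (F A)"
| "scope_set E V \<Longrightarrow> \<forall>I\<in>#G. sub_item E I \<Longrightarrow> sub_item E (Br G V)"

inductive_simps sub_item_F_iff [simp]: "sub_item E (F A)"
inductive_simps sub_item_Br_iff [simp]: "sub_item E (Br G V)"

definition sub_ctx :: "fm \<Rightarrow> ctx \<Rightarrow> bool" where
  "sub_ctx E G \<longleftrightarrow> (\<forall>I\<in>#G. sub_item E I)"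

lemma scope_set_Vof:
  "distinct (bvl E) \<Longrightarrow> scope_set E V \<Longrightarrow> \<exists>w\<in>set (bvl E). V = Vof E w"
  unfolding scope_set_def using Vof_eq mem_bvl_iff by blast

lemma clean_sub_ctx: "clean G D \<Longrightarrow> sub_ctx E G \<Longrightarrow> sub_ctx E D"
  by (induction rule: clean.induct) (auto simp: sub_ctx_def)

lemma nf_sub_ctx:
  assumes "nf_strategy nf" "sub_ctx E G"
  shows "sub_ctx E (nf G)"
proof -
  have "clean\<^sup>*\<^sup>* G (nf G)"
    using assms(1) unfolding nf_strategy_def by blast
  then show ?thesis
    using assms(2) by induction (auto intro: clean_sub_ctx)
qed

lemma nest_sub_ctxD:
  "sub_ctx E (nest Gs Vs I) \<Longrightarrow> length Gs = Suc (length Vs) \<Longrightarrow>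
   sub_item E I \<and> (\<forall>G\<in>set Gs. sub_ctx E G) \<and> (\<forall>V\<in>set Vs. scope_set E V)"
  by (induction Gs Vs I rule: nest.induct) (auto simp: sub_ctx_def)

lemma foldl_Br_sub_ctx:
  "sub_ctx E acc \<Longrightarrow> \<forall>(V, G)\<in>set ps. scope_set E V \<and> sub_ctx E G \<Longrightarrow>
   sub_ctx E (foldl (\<lambda>acc (V, G). add_mset (Br acc V) G) acc ps)"
proof (induction ps arbitrary: acc)
  case (Cons p ps)
  obtain V G where p: "p = (V, G)"
    by (cases p)
  have "sub_ctx E (add_mset (Br acc V) G)"
    using Cons.prems unfolding p by (simp add: sub_ctx_def)
  then show ?case
    using Cons.IH Cons.prems(2) unfolding p by simp
qed simp

lemma unnest_sub_ctx:
  assumes "\<forall>G\<in>set Gs. sub_ctx E G" "\<forall>V\<in>set Vs. scope_set E V" "Gs \<noteq> []"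
  shows "sub_ctx E (unnest Gs Vs)"
proof -
  have "\<forall>(V, G)\<in>set (zip Vs (tl Gs)). scope_set E V \<and> sub_ctx E G"
    using assms by (auto dest: set_zip_leftD set_zip_rightD list.set_sel(2))
  then show ?thesis
    unfolding unnest_def using assms foldl_Br_sub_ctx by simp
qed

lemma imps_subfms: "imps As P \<in> subfms E \<Longrightarrow> A \<in> set As \<Longrightarrow> A \<in> subfms E"
  by (induction As) (auto simp: imps_def dest: Imp_subfmsD)

lemma ljb_rule_sub_ctx:
  assumes "ljb_rule nf ps s" "nf_strategy nf" "sub_ctx E (fst s)" "snd s \<in> subfms E"
  shows "\<forall>p\<in>set ps. sub_ctx E (fst p) \<and> snd p \<in> subfms E"
  using assms
proof (induction rule: ljb_rule.induct)
  case (L_imp Gs Vs P As)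
  have "length Gs = Suc (length Vs)"
    using L_imp.hyps(1,2) by simp
  moreover have "sub_ctx E (nest Gs Vs (F (imps As P)))"
    using L_imp.prems(2) by simp
  ultimately have "sub_item E (F (imps As P))" "\<forall>G\<in>set Gs. sub_ctx E G" "\<forall>V\<in>set Vs. scope_set E V"
    using nest_sub_ctxD by blast+
  moreover have "Gs \<noteq> []"
    using L_imp.hyps(1) by auto
  ultimately have "sub_ctx E (add_mset (F (imps As P)) (unnest Gs Vs))"
    using unnest_sub_ctx by (simp add: sub_ctx_def)
  then have "sub_ctx E (nf (add_mset (F (imps As P)) (unnest Gs Vs)))"
    using nf_sub_ctx[OF L_imp.prems(1)] by blast
  then show ?case
    using imps_subfms[of As P E] \<open>sub_item E (F (imps As P))\<close> by simp
next
  case (R_all G x A)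
  have "sub_ctx E {#Br G (set (bvl (All x A)))#}"
    using R_all.prems(2,3) by (auto simp: sub_ctx_def scope_set_def)
  then show ?case
    using nf_sub_ctx[OF R_all.prems(1)] All_subfmsD[of x A E] R_all.prems(3) by simp
next
  case (R_imp A G B)
  have "sub_ctx E (add_mset (F A) G)"
    using R_imp.prems(2,3) Imp_subfmsD[of A B E] by (simp add: sub_ctx_def)
  then show ?case
    using nf_sub_ctx[OF R_imp.prems(1)] Imp_subfmsD[of A B E] R_imp.prems(3) by simp
qed

lemma valid_deriv_sub_ctx:
  assumes "valid_deriv nf t" "nf_strategy nf" "sub_ctx E (fst (droot t))" "snd (droot t) \<in> subfms E"
  shows "\<forall>s\<in>nodes t. sub_ctx E (fst s)"
  using assms
proof (induction rule: valid_deriv.induct)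
  case (1 s ts)
  then have "\<forall>t\<in>set ts. sub_ctx E (fst (droot t)) \<and> snd (droot t) \<in> subfms E"
    using ljb_rule_sub_ctx by fastforce
  then show ?case
    using 1 by auto
qed

lemma occurs_sub_item: "occurs I G \<Longrightarrow> sub_ctx E G \<Longrightarrow> sub_item E I"
  by (induction rule: occurs.induct) (auto simp: sub_ctx_def)

section \<open>Normal brackets\<close>

lemma clean_union_right: "clean G G' \<Longrightarrow> clean (G + H) (G' + H)"
proof (induction arbitrary: H rule: clean.induct)
  case (c_out I V D R)
  then show ?case using clean.c_out[of I V D "R + H"] by simp
next
  case (c_empty V R)
  then show ?case using clean.c_empty[of V "R + H"] by simp
next
  case (c_dup I R)
  then show ?case using clean.c_dup[of I "R + H"] by simp
next
  case (c_in D D' V R)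
  then show ?case using clean.c_in[of D D' V "R + H"] by simp
qed

lemma normal_item_Br_free_vars:
  assumes "normal_item (Br D V)" "I \<in># D"
  shows "FVi I \<inter> V \<noteq> {}"
proof
  assume "FVi I \<inter> V = {}"
  then have "clean {#Br (add_mset I (D - {#I#})) V#} {#I, Br (D - {#I#}) V#}"
    using clean.c_out[of I V "D - {#I#}" "{#}"] by simp
  then show False
    using assms unfolding normal_item_def by (auto simp: insert_DiffM)
qed

lemma normal_item_Br_inner:
  assumes "normal_item (Br D V)" "Br D' V' \<in># D"
  shows "normal_item (Br D' V')"
  unfolding normal_item_def
proof
  assume "\<exists>X. clean {#Br D' V'#} X"
  then obtain X where "clean ({#Br D' V'#} + (D - {#Br D' V'#})) (X + (D - {#Br D' V'#}))"
    using clean_union_right by blast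
  then have "clean {#Br D V#} {#Br (X + (D - {#Br D' V'#})) V#}"
    using assms(2) clean.c_in[of D _ V "{#}"] by simp
  then show False
    using assms(1) unfolding normal_item_def by blast
qed

lemma normal_Br_free_var_strictly_above:
  assumes "fv E = {}" "distinct (bvl E)" "sub_item E (Br D (Vof E w))"
    and "normal_item (Br D (Vof E w))" "w \<in> set (bvl E)" "u \<in> FVi (Br D (Vof E w))"
  shows "w \<in> Vof E u \<and> w \<noteq> u"
  using assms(3-)
proof (induction "Br D (Vof E w)" arbitrary: D w u rule: sub_item.induct)
  case (2 G)
  then obtain I where I: "I \<in># G" "u \<in> FVi I" and u: "u \<notin> Vof E w"
    by auto
  obtain y where y: "y \<in> FVi I" "y \<in> Vof E w"
    using normal_item_Br_free_vars[of G "Vof E w" I] "2.prems"(1) I by auto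
  have "u \<in> Vof E y \<or> y \<in> Vof E u"
  proof (cases I)
    case (F A)
    then show ?thesis
      using free_vars_scope_comparable[of A E y u] "2.hyps"(2) I y assms(1) by auto
  next
    case (Br D' V')
    have "scope_set E V'"
      using "2.hyps"(2) I(1) Br by auto
    then obtain w' where w': "w' \<in> set (bvl E)" "V' = Vof E w'"
      using scope_set_Vof[OF assms(2)] by blast
    have "normal_item I"
      using normal_item_Br_inner "2.prems"(1) I(1) Br by blast
    then have "w' \<in> Vof E y" "w' \<in> Vof E u"
      using "2.hyps"(2) I y Br w' by blast+
    then show ?thesis
      using Vof_chain[OF assms(2)] by blast
  qed
  then show ?case
    using strictly_above_if_comparable_outside[OF assms(2)] y u by blast
qed

theorem proposition11:
  fixes nf :: "ctx \<Rightarrow> ctx" and E :: fm and x z :: var and G :: ctx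
    and t :: "seq dtree" and s :: seq
  assumes "nf_strategy nf"
    and "fv E = {}"
    and "distinct (bvl E)"
    and "\<exists>A. All x A \<in> subfms E"
    and "valid_deriv nf t"
    and "droot t = ({#}, E)"
    and "s \<in> nodes t"
    and "occurs (Br G (Vof E x)) (fst s)"
    and "normal_item (Br G (Vof E x))"
    and "z \<in> FVi (Br G (Vof E x))"
  shows "in_scope E x z"
proof -
  have "sub_ctx E (fst s)"
    using valid_deriv_sub_ctx[OF assms(5,1)] assms(6,7) by (simp add: sub_ctx_def subfms_refl)
  then have "sub_item E (Br G (Vof E x))"
    using occurs_sub_item assms(8) by blast
  moreover have "x \<in> set (bvl E)"
    using assms(4) mem_bvl_iff by blast
  ultimately have "x \<in> Vof E z \<and> x \<noteq> z"
    using normal_Br_free_var_strictly_above[OF assms(2,3) _ assms(9) _ assms(10)] by blast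
  then show ?thesis
    using in_scope_if_mem_Vof[OF assms(3)] by blast
qed

end
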